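(* Let $c=(c_k)_{k\ge1}$ be a sequence of complex numbers with $c_k\to0$ as $k\to\infty$. Then $$\|T_c\|\le\sum_{k=1}^\infty\sqrt{k(k+1)}\,|c_{k+2}-2c_{k+1}+c_k|.$$
   Context: For a complex sequence $c=(c_k)_{k\ge1}$, $T_c$ is the infinite matrix indexed by $j,k\ge1$ with entries $(T_c)_{jk}=c_k$ if $j=k$, $(T_c)_{jk}=c_k-c_{k-1}$ if $j<k$, and $(T_c)_{jk}=0$ if $j>k$. $\|T_c\|$ denotes its operator norm on $\ell^2$ if it acts boundedly, and $\|T_c\|=\infty$ otherwise. *)

theory Defs
  imports Complex_Main "HOL-Library.Extended_Real"
begin

text \<open>Sequences are functions nat => complex; index 0 is a dummy padding coordinate,
  the paper's indices j,k >= 1 are used literally. The matrix has zero row/column 0.\<close>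

definition Tc :: "(nat \<Rightarrow> complex) \<Rightarrow> nat \<Rightarrow> nat \<Rightarrow> complex" where
  "Tc c j k = (if j = 0 \<or> k = 0 then 0
               else if j = k then c k
               else if j < k then c k - c (k - 1)
               else 0)"

definition l2 :: "(nat \<Rightarrow> complex) set" where
  "l2 = {x. summable (\<lambda>k. (cmod (x k))\<^sup>2)}"

definition l2norm :: "(nat \<Rightarrow> complex) \<Rightarrow> real" where
  "l2norm x = sqrt (\<Sum>k. (cmod (x k))\<^sup>2)"

definition mat_apply :: "(nat \<Rightarrow> nat \<Rightarrow> complex) \<Rightarrow> (nat \<Rightarrow> complex) \<Rightarrow> nat \<Rightarrow> complex" where
  "mat_apply A x = (\<lambda>j. \<Sum>k. A j k * x k)"

definition acts_boundedly :: "(nat \<Rightarrow> nat \<Rightarrow> complex) \<Rightarrow> bool" where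
  "acts_boundedly A \<longleftrightarrow>
     (\<forall>x\<in>l2. (\<forall>j. summable (\<lambda>k. A j k * x k)) \<and> mat_apply A x \<in> l2) \<and>
     (\<exists>B. \<forall>x\<in>l2. l2norm (mat_apply A x) \<le> B * l2norm x)"

definition op_norm :: "(nat \<Rightarrow> nat \<Rightarrow> complex) \<Rightarrow> ereal" where
  "op_norm A = (if acts_boundedly A
     then Sup ((\<lambda>x. ereal (l2norm (mat_apply A x))) ` {x \<in> l2. l2norm x \<le> 1})
     else \<infinity>)"

end

theory Submission imports Defs "HOL-Analysis.Analysis" begin

text \<open>Put \<open>d k = c k - c (k+1)\<close> and \<open>a m = c m - 2 c (m+1) + c (m+2)\<close>. When the bound is
  finite, \<open>m d m \<rightarrow> 0\<close>, and summation by parts twice writes \<open>T_c = (\<Sum>m. a m Z_m)\<close> entrywise,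
  where \<open>(Z_m x) j = (m+1-j) x j - (\<Sum>k\<in>{j<..m+1}. x k)\<close> for \<open>1 \<le> j \<le> m\<close> and \<open>0\<close> otherwise.
  By Helmert's identity, \<open>\<Sum>k\<in>{1..m+1}. |x k|\<^sup>2\<close> is the sum over \<open>j \<le> m\<close> of
  \<open>|(Z_m x) j|\<^sup>2 / ((m+1-j)(m+2-j))\<close> plus a nonnegative term, so \<open>\<parallel>Z_m\<parallel> \<le> sqrt (m(m+1))\<close>;
  Minkowski's inequality sums these bounds.\<close>

lemma helmert_step:
  fixes u v :: complex and K :: real
  assumes "K > 0"
  shows "(cmod (of_real K * u - v))\<^sup>2 / (K * (K + 1)) - (cmod v)\<^sup>2 / K
       = (cmod u)\<^sup>2 - (cmod (u + v))\<^sup>2 / (K + 1)"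
proof -
  have "K \<noteq> 0" "K + 1 \<noteq> 0" using assms by auto
  then show ?thesis
    unfolding cmod_power2 by (simp add: divide_simps) (simp add: power2_eq_square algebra_simps)
qed

lemma helmert_identity:
  fixes x :: "nat \<Rightarrow> complex"
  assumes "j \<le> n"
  shows "(\<Sum>i\<in>{j..<n}. (cmod (of_nat (n - i) * x i - (\<Sum>k\<in>{Suc i..n}. x k)))\<^sup>2
                          / (real (n - i) * real (Suc n - i)))
       = (\<Sum>k\<in>{j..n}. (cmod (x k))\<^sup>2) - (cmod (\<Sum>k\<in>{j..n}. x k))\<^sup>2 / real (Suc n - j)"
  using assms
proof (induction j rule: inc_induct)
  case base
  then show ?case by simp
next
  case (step i)
  have "{i..<n} = insert i {Suc i..<n}" "{i..n} = insert i {Suc i..n}"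
    using step by auto
  moreover have "real (Suc n - i) = real (n - i) + 1"
    using step by simp
  ultimately show ?case
    using step.IH helmert_step[of "real (n - i)" "x i" "\<Sum>k\<in>{Suc i..n}. x k"] step
    by (simp add: algebra_simps)
qed

definition first_diff :: "(nat \<Rightarrow> complex) \<Rightarrow> nat \<Rightarrow> complex" where
  "first_diff c k = c k - c (Suc k)"

definition second_diff :: "(nat \<Rightarrow> complex) \<Rightarrow> nat \<Rightarrow> complex" where
  "second_diff c m = c m - 2 * c (Suc m) + c (Suc (Suc m))"

lemma second_diff_eq_first_diff: "second_diff c m = first_diff c m - first_diff c (Suc m)"
  unfolding second_diff_def first_diff_def by simp

lemma first_diff_LIMSEQ_zero:
  assumes "c \<longlonglongrightarrow> 0"
  shows "first_diff c \<longlonglongrightarrow> 0"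
proof -
  have "(\<lambda>k. c k - c (Suc k)) \<longlonglongrightarrow> 0 - 0"
    by (intro tendsto_diff assms LIMSEQ_Suc)
  then show ?thesis unfolding first_diff_def[abs_def] by simp
qed

lemma second_diff_sums_first_diff:
  assumes "c \<longlonglongrightarrow> 0"
  shows "(\<lambda>i. second_diff c (i + n)) sums first_diff c n"
  using telescope_sums'[OF LIMSEQ_ignore_initial_segment[OF first_diff_LIMSEQ_zero[OF assms]]]
  by (simp add: second_diff_eq_first_diff)

lemma LIMSEQ_of_nat_mult_first_diff:
  assumes c: "c \<longlonglongrightarrow> 0" and sm: "summable (\<lambda>m. real m * cmod (second_diff c m))"
  shows "(\<lambda>n. real n * cmod (first_diff c n)) \<longlonglongrightarrow> 0"
proof -
  let ?g = "\<lambda>m. real m * cmod (second_diff c m)"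
  have sa: "summable (\<lambda>m. cmod (second_diff c m))"
    by (rule summable_comparison_test'[OF sm, of 1]) (simp add: mult_le_cancel_right1)
  have "(\<lambda>n. suminf ?g - (\<Sum>i<n. ?g i)) \<longlonglongrightarrow> suminf ?g - suminf ?g"
    by (intro tendsto_diff tendsto_const summable_LIMSEQ sm)
  then have tail: "(\<lambda>n. \<Sum>i. ?g (i + n)) \<longlonglongrightarrow> 0"
    unfolding suminf_minus_initial_segment[OF sm] by simp
  show ?thesis
  proof (rule Lim_null_comparison[OF always_eventually tail], intro allI)
    fix n
    have s1: "summable (\<lambda>i. cmod (second_diff c (i + n)))"
      using summable_ignore_initial_segment[OF sa] .
    have "cmod (first_diff c n) \<le> (\<Sum>i. cmod (second_diff c (i + n)))"
      unfolding sums_unique[OF second_diff_sums_first_diff[OF c, of n]]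
      by (rule summable_norm[OF s1])
    then have "real n * cmod (first_diff c n) \<le> (\<Sum>i. real n * cmod (second_diff c (i + n)))"
      using suminf_mult[OF s1, of "real n"] by (simp add: mult_left_mono)
    also have "\<dots> \<le> (\<Sum>i. ?g (i + n))"
      by (intro suminf_le summable_mult s1 summable_ignore_initial_segment[OF sm])
        (simp add: mult_right_mono)
    finally show "norm (real n * cmod (first_diff c n)) \<le> (\<Sum>i. ?g (i + n))" by simp
  qed
qed

lemma summable_first_diff_square:
  assumes c: "c \<longlonglongrightarrow> 0" and sm: "summable (\<lambda>m. real m * cmod (second_diff c m))"
  shows "summable (\<lambda>n. (cmod (first_diff c n))\<^sup>2)"
proof -
  have "Bseq (\<lambda>n. real n * cmod (first_diff c n))"
    using LIMSEQ_of_nat_mult_first_diff[OF c sm] by (rule convergent_imp_Bseq[OF convergentI])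
  then obtain B where B: "\<And>n. real n * cmod (first_diff c n) \<le> B"
    by (auto simp: Bseq_def)
  have "summable (\<lambda>n. B\<^sup>2 * inverse (real n ^ 2))"
    by (intro summable_mult inverse_power_summable) simp
  then show ?thesis
  proof (rule summable_comparison_test')
    fix n :: nat assume "n \<ge> 1"
    then have "cmod (first_diff c n) \<le> B / real n"
      using B[of n] by (simp add: field_simps)
    then have "(cmod (first_diff c n))\<^sup>2 \<le> (B / real n)\<^sup>2"
      by (intro power_mono) auto
    then show "norm ((cmod (first_diff c n))\<^sup>2) \<le> B\<^sup>2 * inverse (real n ^ 2)"
      by (simp add: divide_inverse power_mult_distrib power_inverse)
  qed
qed

definition layer :: "(nat \<Rightarrow> complex) \<Rightarrow> nat \<Rightarrow> nat \<Rightarrow> complex" where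
  "layer x m j = (if 1 \<le> j \<and> j \<le> m
                  then (of_nat (Suc m) - of_nat j) * x j - (\<Sum>k\<in>{Suc j..Suc m}. x k) else 0)"

lemma layer_sum_square_le:
  "(\<Sum>j\<in>{1..m}. (cmod (layer x m j))\<^sup>2) \<le> real m * real (Suc m) * (\<Sum>k\<in>{1..Suc m}. (cmod (x k))\<^sup>2)"
proof -
  let ?q = "\<lambda>i. real (Suc m - i) * real (Suc (Suc m) - i)"
  have "(\<Sum>i\<in>{1..m}. (cmod (layer x m i))\<^sup>2 / ?q i) \<le> (\<Sum>k\<in>{1..Suc m}. (cmod (x k))\<^sup>2)"
    using helmert_identity[of 1 "Suc m" x]
    by (simp add: layer_def of_nat_diff atLeastLessThanSuc_atLeastAtMost)
  moreover have "(cmod (layer x m i))\<^sup>2 \<le> real m * real (Suc m) * ((cmod (layer x m i))\<^sup>2 / ?q i)"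
    if i: "i \<in> {1..m}" for i
  proof -
    have "?q i \<noteq> 0" using i by simp
    then have "(cmod (layer x m i))\<^sup>2 = ?q i * ((cmod (layer x m i))\<^sup>2 / ?q i)"
      by (metis times_divide_eq_right nonzero_mult_div_cancel_left)
    also have "\<dots> \<le> real m * real (Suc m) * ((cmod (layer x m i))\<^sup>2 / ?q i)"
      using i by (intro mult_right_mono mult_mono) auto
    finally show ?thesis .
  qed
  then have "(\<Sum>j\<in>{1..m}. (cmod (layer x m j))\<^sup>2)
      \<le> real m * real (Suc m) * (\<Sum>i\<in>{1..m}. (cmod (layer x m i))\<^sup>2 / ?q i)"
    unfolding sum_distrib_left by (rule sum_mono)
  ultimately show ?thesis
    by (meson mult_left_mono order_trans of_nat_0_le_iff mult_nonneg_nonneg)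
qed

lemma L2_set_layer_le:
  assumes sx: "summable (\<lambda>k. (cmod (x k))\<^sup>2)"
  shows "L2_set (\<lambda>j. cmod (layer x m j)) A
       \<le> sqrt (real m * real (Suc m)) * sqrt (\<Sum>k. (cmod (x k))\<^sup>2)"
proof (cases "finite A")
  case True
  let ?g = "\<lambda>j. (cmod (layer x m j))\<^sup>2"
  have "sum ?g A = sum ?g (A \<inter> {1..m})"
    by (rule sum.mono_neutral_right) (auto simp: layer_def True)
  also have "\<dots> \<le> sum ?g {1..m}"
    by (rule sum_mono2) auto
  also have "\<dots> \<le> real m * real (Suc m) * (\<Sum>k\<in>{1..Suc m}. (cmod (x k))\<^sup>2)"
    by (rule layer_sum_square_le)
  also have "\<dots> \<le> real m * real (Suc m) * (\<Sum>k. (cmod (x k))\<^sup>2)"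
    by (intro mult_left_mono sum_le_suminf sx) auto
  finally show ?thesis
    unfolding L2_set_def real_sqrt_mult[symmetric] by (rule real_sqrt_le_mono)
qed (simp add: suminf_nonneg[OF sx])

definition row_tail :: "(nat \<Rightarrow> complex) \<Rightarrow> (nat \<Rightarrow> complex) \<Rightarrow> nat \<Rightarrow> nat \<Rightarrow> complex" where
  "row_tail c x j k = (if j < k then first_diff c (k - 1) * x k else 0)"

lemma Tc_mult_eq:
  assumes "1 \<le> j"
  shows "Tc c j k * x k = (if k = j then c j * x j else 0) - row_tail c x j k"
  using assms by (cases k) (auto simp: Tc_def row_tail_def first_diff_def algebra_simps)

lemma summable_row_tail:
  assumes "summable (\<lambda>n. (cmod (first_diff c n))\<^sup>2)" and "summable (\<lambda>k. (cmod (x k))\<^sup>2)"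
  shows "summable (row_tail c x j)"
proof (rule summable_comparison_test')
  have "summable (\<lambda>k. (cmod (first_diff c (k - 1)))\<^sup>2)"
    by (subst summable_Suc_iff[symmetric]) (simp add: assms(1))
  then show "summable (\<lambda>k. ((cmod (first_diff c (k - 1)))\<^sup>2 + (cmod (x k))\<^sup>2) / 2)"
    by (intro summable_divide summable_add assms(2))
  show "norm (row_tail c x j k) \<le> ((cmod (first_diff c (k - 1)))\<^sup>2 + (cmod (x k))\<^sup>2) / 2" for k
    using sum_squares_bound[of "cmod (first_diff c (k - 1))" "cmod (x k)"]
    by (auto simp: row_tail_def norm_mult)
qed

lemma Tc_row_sums:
  assumes "1 \<le> j" and "summable (row_tail c x j)"
  shows "(\<lambda>k. Tc c j k * x k) sums (c j * x j - suminf (row_tail c x j))"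
  unfolding Tc_mult_eq[OF assms(1)] by (intro sums_diff sums_single summable_sums assms(2))

lemma sum_layers_eq:
  assumes j: "1 \<le> j" and N: "j \<le> N"
  shows "(\<Sum>m<N. second_diff c m * layer x m j)
       = (c j - c N - (of_nat N - of_nat j) * first_diff c N) * x j - (\<Sum>k\<le>N. row_tail c x j k)
         + first_diff c N * (\<Sum>k\<in>{Suc j..N}. x k)"
  using N
proof (induction N rule: dec_induct)
  case base
  have "(\<Sum>m<j. second_diff c m * layer x m j) = 0" "(\<Sum>k\<le>j. row_tail c x j k) = 0"
    by (auto intro: sum.neutral simp: layer_def row_tail_def)
  then show ?case by simp
next
  case (step N)
  have layer_N: "layer x N j = (of_nat (Suc N) - of_nat j) * x j - (\<Sum>k\<in>{Suc j..N}. x k) - x (Suc N)"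
    using step j by (simp add: layer_def)
  have sum_x: "(\<Sum>k\<in>{Suc j..Suc N}. x k) = (\<Sum>k\<in>{Suc j..N}. x k) + x (Suc N)"
    using step by simp
  have sum_tail: "(\<Sum>k\<le>Suc N. row_tail c x j k) = (\<Sum>k\<le>N. row_tail c x j k) + first_diff c N * x (Suc N)"
    using step by (simp add: row_tail_def)
  have c_Suc: "c (Suc N) = c N - first_diff c N"
    by (simp add: first_diff_def)
  show ?case
    unfolding sum.lessThan_Suc step.IH layer_N sum_x sum_tail c_Suc second_diff_eq_first_diff[of c N] of_nat_Suc
    by (simp add: algebra_simps)
qed

lemma LIMSEQ_mult_partial_sum_zero:
  fixes e x :: "nat \<Rightarrow> complex"
  assumes e: "(\<lambda>N. real N * cmod (e N)) \<longlonglongrightarrow> 0" and sx: "summable (\<lambda>k. (cmod (x k))\<^sup>2)"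
  shows "(\<lambda>N. e N * (\<Sum>k\<in>{Suc j..N}. x k)) \<longlonglongrightarrow> 0"
proof (rule Lim_null_comparison[OF always_eventually])
  let ?X = "sqrt (\<Sum>k. (cmod (x k))\<^sup>2)"
  have xk: "cmod (x k) \<le> ?X" for k
    by (intro real_le_rsqrt) (use sum_le_suminf[OF sx, of "{k}"] in simp)
  show "\<forall>N. norm (e N * (\<Sum>k\<in>{Suc j..N}. x k)) \<le> real N * cmod (e N) * ?X"
  proof
    fix N
    have "norm (\<Sum>k\<in>{Suc j..N}. x k) \<le> (\<Sum>k\<in>{Suc j..N}. cmod (x k))"
      by (rule norm_sum)
    also have "\<dots> \<le> real (card {Suc j..N}) * ?X"
      by (rule sum_bounded_above) (rule xk)
    also have "\<dots> \<le> real N * ?X"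
      by (intro mult_right_mono) (auto simp: suminf_nonneg[OF sx])
    finally have "norm (\<Sum>k\<in>{Suc j..N}. x k) \<le> real N * ?X" .
    from mult_left_mono[OF this norm_ge_zero[of "e N"]]
    show "norm (e N * (\<Sum>k\<in>{Suc j..N}. x k)) \<le> real N * cmod (e N) * ?X"
      by (simp add: norm_mult algebra_simps)
  qed
  show "(\<lambda>N. real N * cmod (e N) * ?X) \<longlonglongrightarrow> 0"
    using tendsto_mult[OF e tendsto_const[of ?X]] by simp
qed

lemma layers_sums_mat_apply:
  assumes c: "c \<longlonglongrightarrow> 0" and sm: "summable (\<lambda>m. real m * cmod (second_diff c m))"
    and sx: "summable (\<lambda>k. (cmod (x k))\<^sup>2)"
  shows "(\<lambda>m. second_diff c m * layer x m j) sums mat_apply (Tc c) x j"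
proof (cases "j = 0")
  case True
  then show ?thesis by (simp add: layer_def mat_apply_def Tc_def)
next
  case False
  then have j: "1 \<le> j" by simp
  have rs: "summable (row_tail c x j)"
    by (rule summable_row_tail[OF summable_first_diff_square[OF c sm] sx])
  have Nd: "(\<lambda>N. real N * cmod (first_diff c N)) \<longlonglongrightarrow> 0"
    by (rule LIMSEQ_of_nat_mult_first_diff[OF c sm])
  then have "(\<lambda>N. of_nat N * first_diff c N) \<longlonglongrightarrow> 0"
    by (subst tendsto_norm_zero_iff[symmetric]) (simp add: norm_mult)
  then have "(\<lambda>N. of_nat N * first_diff c N - of_nat j * first_diff c N) \<longlonglongrightarrow> 0 - of_nat j * 0"
    by (intro tendsto_intros first_diff_LIMSEQ_zero c)
  then have "(\<lambda>N. (c j - c N - (of_nat N - of_nat j) * first_diff c N) * x j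
      - (\<Sum>k\<le>N. row_tail c x j k) + first_diff c N * (\<Sum>k\<in>{Suc j..N}. x k))
      \<longlonglongrightarrow> (c j - 0 - 0) * x j - suminf (row_tail c x j) + 0"
    by (intro tendsto_intros c summable_LIMSEQ' rs LIMSEQ_mult_partial_sum_zero[OF Nd sx])
      (simp add: algebra_simps)
  moreover have "\<forall>\<^sub>F N in sequentially. (c j - c N - (of_nat N - of_nat j) * first_diff c N) * x j
      - (\<Sum>k\<le>N. row_tail c x j k) + first_diff c N * (\<Sum>k\<in>{Suc j..N}. x k)
      = (\<Sum>m<N. second_diff c m * layer x m j)"
    using eventually_ge_at_top[of j] by eventually_elim (simp add: sum_layers_eq[OF j])
  ultimately show ?thesis
    unfolding sums_def mat_apply_def sums_unique[OF Tc_row_sums[OF j rs], symmetric]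
    by (simp add: Lim_transform_eventually)
qed

lemma L2_set_norm_sum_le:
  fixes f :: "'i \<Rightarrow> 'a \<Rightarrow> 'b::real_normed_vector"
  assumes "finite M"
  shows "L2_set (\<lambda>j. norm (\<Sum>m\<in>M. f m j)) A \<le> (\<Sum>m\<in>M. L2_set (\<lambda>j. norm (f m j)) A)"
  using assms
proof (induction M rule: finite_induct)
  case empty
  then show ?case by (simp add: L2_set_0')
next
  case (insert m M)
  have "L2_set (\<lambda>j. norm (\<Sum>m\<in>insert m M. f m j)) A
      \<le> L2_set (\<lambda>j. norm (f m j) + norm (\<Sum>m\<in>M. f m j)) A"
    by (rule L2_set_mono) (auto simp: insert norm_triangle_ineq)
  also have "\<dots> \<le> L2_set (\<lambda>j. norm (f m j)) A + L2_set (\<lambda>j. norm (\<Sum>m\<in>M. f m j)) A"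
    by (rule L2_set_triangle_ineq)
  also have "\<dots> \<le> (\<Sum>m\<in>insert m M. L2_set (\<lambda>j. norm (f m j)) A)"
    using insert by simp
  finally show ?case .
qed

lemma l2norm_suminf_le:
  fixes f :: "nat \<Rightarrow> nat \<Rightarrow> complex"
  assumes sums: "\<And>j. (\<lambda>m. f m j) sums y j" and b: "summable b"
    and bound: "\<And>m n. L2_set (\<lambda>j. cmod (f m j)) {..<n} \<le> b m"
  shows "y \<in> l2" and "l2norm y \<le> suminf b"
proof -
  have b0: "0 \<le> b m" for m
    using bound[of m 0] by simp
  have "L2_set (\<lambda>j. cmod (y j)) {..<n} \<le> suminf b" for n
  proof (rule LIMSEQ_le_const2)
    show "(\<lambda>M. L2_set (\<lambda>j. cmod (\<Sum>m<M. f m j)) {..<n}) \<longlonglongrightarrow> L2_set (\<lambda>j. cmod (y j)) {..<n}"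
      unfolding L2_set_def by (intro tendsto_intros sums[unfolded sums_def])
    have "L2_set (\<lambda>j. cmod (\<Sum>m<M. f m j)) {..<n} \<le> suminf b" for M
    proof -
      have "L2_set (\<lambda>j. cmod (\<Sum>m<M. f m j)) {..<n} \<le> (\<Sum>m<M. L2_set (\<lambda>j. cmod (f m j)) {..<n})"
        by (rule L2_set_norm_sum_le) simp
      also have "\<dots> \<le> (\<Sum>m<M. b m)"
        by (intro sum_mono bound)
      also have "\<dots> \<le> suminf b"
        by (intro sum_le_suminf b b0) simp
      finally show ?thesis .
    qed
    then show "\<exists>N. \<forall>M\<ge>N. L2_set (\<lambda>j. cmod (\<Sum>m<M. f m j)) {..<n} \<le> suminf b"
      by blast
  qed
  then have partial: "(\<Sum>j<n. (cmod (y j))\<^sup>2) \<le> (suminf b)\<^sup>2" for n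
    unfolding L2_set_def by (rule sqrt_le_D)
  have sy: "summable (\<lambda>j. (cmod (y j))\<^sup>2)"
    by (rule summableI_nonneg_bounded[OF _ partial]) simp
  then show "y \<in> l2"
    by (simp add: l2_def)
  show "l2norm y \<le> suminf b"
    unfolding l2norm_def
    by (intro real_le_lsqrt suminf_nonneg b b0 suminf_le_const sy partial)
qed

lemma op_norm_le:
  assumes bounded: "\<And>x. x \<in> l2 \<Longrightarrow> (\<forall>j. summable (\<lambda>k. A j k * x k)) \<and> mat_apply A x \<in> l2
                                    \<and> l2norm (mat_apply A x) \<le> B * l2norm x"
    and B: "0 \<le> B"
  shows "op_norm A \<le> ereal B"
proof -
  have "acts_boundedly A"
    unfolding acts_boundedly_def by (intro conjI ballI exI[of _ B]) (use bounded in blast)+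
  moreover have "l2norm (mat_apply A x) \<le> B" if "x \<in> l2" "l2norm x \<le> 1" for x
  proof -
    have "l2norm (mat_apply A x) \<le> B * l2norm x"
      using bounded that(1) by blast
    also have "\<dots> \<le> B"
      using that(2) B by (simp add: mult_left_le)
    finally show ?thesis .
  qed
  ultimately show ?thesis
    unfolding op_norm_def by (auto intro: SUP_least)
qed

lemma summable_of_nat_mult_le_sqrt:
  fixes f :: "nat \<Rightarrow> real"
  assumes "summable (\<lambda>m. sqrt (real m * real (Suc m)) * f m)" and "\<And>m. 0 \<le> f m"
  shows "summable (\<lambda>m. real m * f m)"
proof (rule summable_comparison_test'[OF assms(1)])
  fix m
  have "real m \<le> sqrt (real m * real (Suc m))"
    by (intro real_le_rsqrt) (simp add: power2_eq_square distrib_left)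
  then show "norm (real m * f m) \<le> sqrt (real m * real (Suc m)) * f m"
    using assms(2)[of m] by (simp add: mult_right_mono)
qed

lemma Tc_apply_bound:
  assumes c: "c \<longlonglongrightarrow> 0"
    and sw: "summable (\<lambda>m. sqrt (real m * real (Suc m)) * cmod (second_diff c m))"
    and x: "x \<in> l2"
  shows "(\<forall>j. summable (\<lambda>k. Tc c j k * x k)) \<and> mat_apply (Tc c) x \<in> l2 \<and>
    l2norm (mat_apply (Tc c) x)
      \<le> (\<Sum>m. sqrt (real m * real (Suc m)) * cmod (second_diff c m)) * l2norm x"
proof -
  let ?w = "\<lambda>m. sqrt (real m * real (Suc m))"
  have sx: "summable (\<lambda>k. (cmod (x k))\<^sup>2)"
    using x by (simp add: l2_def)
  have sm: "summable (\<lambda>m. real m * cmod (second_diff c m))"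
    by (rule summable_of_nat_mult_le_sqrt[OF sw]) simp
  have rows: "summable (\<lambda>k. Tc c j k * x k)" for j
  proof (cases "j = 0")
    case True
    then show ?thesis by (simp add: Tc_def)
  next
    case False
    then show ?thesis
      by (intro sums_summable[OF Tc_row_sums]
          summable_row_tail[OF summable_first_diff_square[OF c sm] sx]) simp
  qed
  have layer_bound: "L2_set (\<lambda>j. cmod (second_diff c m * layer x m j)) {..<n}
      \<le> ?w m * cmod (second_diff c m) * l2norm x" for m n
  proof -
    have "L2_set (\<lambda>j. cmod (second_diff c m * layer x m j)) {..<n}
        = cmod (second_diff c m) * L2_set (\<lambda>j. cmod (layer x m j)) {..<n}"
      by (simp add: norm_mult L2_set_right_distrib)
    also have "\<dots> \<le> cmod (second_diff c m) * (?w m * l2norm x)"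
      unfolding l2norm_def by (intro mult_left_mono L2_set_layer_le[OF sx]) simp
    finally show ?thesis
      by (simp only: ac_simps)
  qed
  show ?thesis
    using rows l2norm_suminf_le[OF layers_sums_mat_apply[OF c sm sx] summable_mult2[OF sw] layer_bound]
    unfolding suminf_mult2[OF sw] by blast
qed

theorem theorem2:
  fixes c :: "nat \<Rightarrow> complex"
  assumes "c \<longlonglongrightarrow> 0"
  shows "op_norm (Tc c) \<le>
    (\<Sum>k. ereal (sqrt (real (Suc k) * real (Suc k + 1)) *
                  cmod (c (k + 3) - 2 * c (k + 2) + c (k + 1))))"
proof -
  define G where "G m = sqrt (real m * real (Suc m)) * cmod (second_diff c m)" for m
  have shift: "sqrt (real (Suc k) * real (Suc k + 1)) * cmod (c (k + 3) - 2 * c (k + 2) + c (k + 1))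
      = G (Suc k)" for k
    by (simp add: G_def second_diff_def numeral_3_eq_3) (simp add: algebra_simps)
  show ?thesis
  proof (cases "(\<Sum>k. ereal (G (Suc k))) = \<infinity>")
    case True
    then show ?thesis unfolding shift by simp
  next
    case False
    then have sGs: "summable (\<lambda>k. G (Suc k))"
      using summable_real_of_ereal[of "\<lambda>k. ereal (G (Suc k))"] by (simp add: G_def)
    then have sG: "summable G"
      by (simp add: summable_Suc_iff)
    have "(\<Sum>k. ereal (G (Suc k))) = ereal (suminf G)"
      using suminf_ereal'[OF sGs] suminf_split_head[OF sG] by (simp add: G_def)
    moreover have "op_norm (Tc c) \<le> ereal (suminf G)"
      using Tc_apply_bound[OF assms sG[unfolded G_def]]
      by (intro op_norm_le suminf_nonneg[OF sG]) (auto simp: G_def[abs_def])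
    ultimately show ?thesis unfolding shift by simp
  qed
qed

end
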